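(* Let $\alpha\ge1$. Any outcome that satisfies $\alpha$-proportional fairness is in the $\left(\gamma,\frac{\gamma(\alpha+1)}{\gamma-1}\right)$-transferable core for every $\gamma>1$.
   Context: Let $(\mathcal X,d)$ be a metric space, $N=[n]$ a set of agents and $C$ a set of candidates located in $\mathcal X$, $k\in\mathbb N^+$; an outcome is $W\subseteq C$ with $|W|\le k$; $d(i,W)=\min_{c\in W}d(i,c)$. $\alpha$-proportional fairness: there is no group $N'\subseteq N$ with $|N'|\ge n/k$ and candidate $c\in C\setminus W$ such that $\alpha\, d(i,c)<d(i,W)$ for all $i\in N'$. $(\gamma,\alpha)$-transferable core: $W$ is in it if there is no group $N'\subseteq N$ and candidate $c\in C\setminus W$ with $|N'|\ge\gamma n/k$ and $\alpha\sum_{i\in N'}d(i,c)<\sum_{i\in N'}d(i,W)$. *)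

theory Defs
  imports "HOL-Analysis.Analysis"
begin

text \<open>Agents are elements of a finite set N (of any type 'i), located by xa :: 'i => 'a;
 candidates are elements of a set C (of any type 'c), located by yc :: 'c => 'a;
 'a is a metric space with metric dist.\<close>

definition dist_ac :: "('i \<Rightarrow> 'a::metric_space) \<Rightarrow> ('c \<Rightarrow> 'a) \<Rightarrow> 'i \<Rightarrow> 'c \<Rightarrow> real" where
  "dist_ac xa yc i c = dist (xa i) (yc c)"

definition dist_set :: "('i \<Rightarrow> 'a::metric_space) \<Rightarrow> ('c \<Rightarrow> 'a) \<Rightarrow> 'i \<Rightarrow> 'c set \<Rightarrow> real" where
  "dist_set xa yc i W = Min ((\<lambda>c. dist_ac xa yc i c) ` W)"

definition is_outcome :: "'c set \<Rightarrow> nat \<Rightarrow> 'c set \<Rightarrow> bool" where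
  "is_outcome C k W \<longleftrightarrow> W \<subseteq> C \<and> finite W \<and> card W \<le> k"

definition proportionally_fair ::
  "real \<Rightarrow> 'i set \<Rightarrow> 'c set \<Rightarrow> ('i \<Rightarrow> 'a::metric_space) \<Rightarrow> ('c \<Rightarrow> 'a) \<Rightarrow> nat \<Rightarrow> 'c set \<Rightarrow> bool" where
  "proportionally_fair \<alpha> N C xa yc k W \<longleftrightarrow>
     \<not> (\<exists>N' c. N' \<subseteq> N \<and> real (card N') \<ge> real (card N) / real k \<and> c \<in> C - W \<and>
              (\<forall>i\<in>N'. \<alpha> * dist_ac xa yc i c < dist_set xa yc i W))"

definition transferable_core ::
  "real \<Rightarrow> real \<Rightarrow> 'i set \<Rightarrow> 'c set \<Rightarrow> ('i \<Rightarrow> 'a::metric_space) \<Rightarrow> ('c \<Rightarrow> 'a) \<Rightarrow> nat \<Rightarrow> 'c set \<Rightarrow> bool" where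
  "transferable_core \<gamma> \<alpha> N C xa yc k W \<longleftrightarrow>
     \<not> (\<exists>N' c. N' \<subseteq> N \<and> real (card N') \<ge> \<gamma> * real (card N) / real k \<and> c \<in> C - W \<and>
              \<alpha> * (\<Sum>i\<in>N'. dist_ac xa yc i c) < (\<Sum>i\<in>N'. dist_set xa yc i W))"

end

theory Submission
  imports Defs
begin

(* Split a violating group N' into the agents B that would deviate to c on their own and the
   rest A = N' - B. Proportional fairness makes B small, so |A| > (\<gamma> - 1) |B|. The agents of A
   are already served within the factor \<alpha>; an agent i of B is routed through the agent j of A
   closest to c, by the triangle inequality d(i, W) \<le> d(i, c) + d(j, c) + d(j, W) with
   d(j, W) \<le> \<alpha> d(j, c), and |B| d(j, c) \<le> |A| d(j, c) / (\<gamma> - 1) is paid for by the distances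
   of A to c. Altogether the cost of N' at W is at most (\<alpha> \<gamma> + 1) / (\<gamma> - 1) \<le> \<gamma> (\<alpha> + 1) / (\<gamma> - 1)
   times its cost at c. *)

lemma dist_ac_nonneg: "dist_ac xa yc i c \<ge> 0"
  by (simp add: dist_ac_def)

lemma dist_set_le:
  assumes "finite W" "w \<in> W"
  shows "dist_set xa yc i W \<le> dist_ac xa yc i w"
  unfolding dist_set_def using assms by (intro Min_le) auto

lemma dist_set_attained:
  assumes "finite W" "W \<noteq> {}"
  obtains w where "w \<in> W" "dist_set xa yc i W = dist_ac xa yc i w"
proof -
  have "dist_set xa yc i W \<in> (\<lambda>c. dist_ac xa yc i c) ` W"
    unfolding dist_set_def using assms by (intro Min_in) auto
  then show thesis using that by blast
qed

lemma dist_set_triangle: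
  assumes "finite W" "W \<noteq> {}"
  shows "dist_set xa yc i W \<le> dist_ac xa yc i c + dist_ac xa yc j c + dist_set xa yc j W"
proof -
  obtain w where w: "w \<in> W" "dist_set xa yc j W = dist_ac xa yc j w"
    using dist_set_attained[OF assms] by metis
  have "dist_set xa yc i W \<le> dist (xa i) (yc w)"
    using dist_set_le[OF assms(1) w(1)] by (simp add: dist_ac_def)
  also have "\<dots> \<le> dist (xa i) (yc c) + dist (yc c) (xa j) + dist (xa j) (yc w)"
    by (meson add_right_mono dist_triangle order_trans)
  finally show ?thesis
    using w(2) by (simp add: dist_ac_def dist_commute)
qed

lemma proportionally_fair_card_deviating_lt:
  assumes "proportionally_fair \<alpha> N C xa yc k W" "N' \<subseteq> N" "c \<in> C - W"
  shows "real (card {i\<in>N'. \<alpha> * dist_ac xa yc i c < dist_set xa yc i W}) < real (card N) / real k"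
proof (rule ccontr)
  assume "\<not> ?thesis"
  moreover have "{i\<in>N'. \<alpha> * dist_ac xa yc i c < dist_set xa yc i W} \<subseteq> N"
    using assms(2) by blast
  ultimately show False
    using assms(1,3) unfolding proportionally_fair_def not_less by blast
qed

lemma sum_le_if_exceptions_routed:
  fixes f g :: "'i \<Rightarrow> real"
  assumes "finite S" "B \<subseteq> S" "\<gamma> > 1" "\<alpha> \<ge> 1"
    and few: "(\<gamma> - 1) * real (card B) \<le> real (card (S - B))"
    and nonneg: "\<And>i. i \<in> S \<Longrightarrow> f i \<ge> 0"
    and good: "\<And>i. i \<in> S - B \<Longrightarrow> g i \<le> \<alpha> * f i"
    and routed: "\<And>i j. i \<in> B \<Longrightarrow> j \<in> S - B \<Longrightarrow> g i \<le> f i + f j + g j"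
  shows "(\<Sum>i\<in>S. g i) \<le> (\<alpha> * \<gamma> + 1) / (\<gamma> - 1) * (\<Sum>i\<in>S. f i)"
proof (cases "S - B = {}")
  case True
  with few \<open>\<gamma> > 1\<close> have "real (card B) \<le> 0"
    by (simp add: mult_le_0_iff)
  then have "B = {}"
    using \<open>finite S\<close> \<open>B \<subseteq> S\<close> by (simp add: finite_subset)
  then show ?thesis using True by simp
next
  case False
  let ?A = "S - B" and ?D = "\<Sum>i\<in>S. f i"
  have split: "sum h S = sum h ?A + sum h B" for h :: "'i \<Rightarrow> real"
    using assms(1,2) by (metis sum.subset_diff)
  obtain j where j: "j \<in> ?A" and j_min: "\<And>i. i \<in> ?A \<Longrightarrow> f j \<le> f i"
    using ex_min_if_finite[of "f ` ?A"] False \<open>finite S\<close> by (auto simp: not_less)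
  have "real (card ?A) * f j \<le> sum f ?A"
    using sum_mono[of ?A "\<lambda>_. f j" f] j_min by simp
  also have "\<dots> \<le> ?D"
    using split[of f] nonneg \<open>B \<subseteq> S\<close> by (simp add: sum_nonneg subset_iff)
  finally have "(\<gamma> - 1) * (real (card B) * f j) \<le> ?D"
    using mult_right_mono[OF few nonneg[of j]] j by (simp add: mult.assoc)
  then have B_share: "real (card B) * f j \<le> ?D / (\<gamma> - 1)"
    using \<open>\<gamma> > 1\<close> by (simp add: field_simps)
  have "sum g ?A \<le> \<alpha> * sum f ?A"
    unfolding sum_distrib_left by (intro sum_mono good)
  moreover have "sum g B \<le> \<alpha> * sum f B + (1 + \<alpha>) * (real (card B) * f j)"
  proof -
    have "sum g B \<le> (\<Sum>i\<in>B. f i + (1 + \<alpha>) * f j)"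
      using routed[OF _ j] good[OF j] by (intro sum_mono) (fastforce simp: algebra_simps)
    also have "\<dots> \<le> (\<Sum>i\<in>B. \<alpha> * f i + (1 + \<alpha>) * f j)"
      using mult_right_mono[OF \<open>\<alpha> \<ge> 1\<close> nonneg] \<open>B \<subseteq> S\<close> by (intro sum_mono) auto
    finally show ?thesis
      by (simp add: sum.distrib sum_distrib_left mult_ac)
  qed
  ultimately have "sum g S \<le> \<alpha> * ?D + (1 + \<alpha>) * (real (card B) * f j)"
    using split[of g] split[of f] by (simp add: algebra_simps)
  also have "\<dots> \<le> \<alpha> * ?D + (1 + \<alpha>) * (?D / (\<gamma> - 1))"
    using mult_left_mono[OF B_share, of "1 + \<alpha>"] \<open>\<alpha> \<ge> 1\<close> by simp
  also have "\<dots> = (\<alpha> * \<gamma> + 1) / (\<gamma> - 1) * ?D"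
    using \<open>\<gamma> > 1\<close> by (simp add: field_simps)
  finally show ?thesis .
qed

lemma proportionally_fair_imp_transferable_core:
  assumes "finite N" "is_outcome C k W" "W \<noteq> {}" "\<alpha> \<ge> 1" "\<gamma> > 1"
    and fair: "proportionally_fair \<alpha> N C xa yc k W"
  shows "transferable_core \<gamma> ((\<alpha> * \<gamma> + 1) / (\<gamma> - 1)) N C xa yc k W"
  unfolding transferable_core_def
proof (intro notI, elim exE conjE)
  fix N' c
  assume N': "N' \<subseteq> N" "\<gamma> * real (card N) / real k \<le> real (card N')" and c: "c \<in> C - W"
    and violated: "(\<alpha> * \<gamma> + 1) / (\<gamma> - 1) * (\<Sum>i\<in>N'. dist_ac xa yc i c) < (\<Sum>i\<in>N'. dist_set xa yc i W)"
  define B where "B = {i\<in>N'. \<alpha> * dist_ac xa yc i c < dist_set xa yc i W}"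
  have "finite N'" "finite W"
    using N'(1) \<open>finite N\<close> \<open>is_outcome C k W\<close> finite_subset by (auto simp: is_outcome_def)
  have "\<gamma> * real (card B) < \<gamma> * (real (card N) / real k)"
    using proportionally_fair_card_deviating_lt[OF fair N'(1) c] \<open>\<gamma> > 1\<close>
    unfolding B_def by (intro mult_strict_left_mono) auto
  with N'(2) have "\<gamma> * real (card B) \<le> real (card N')"
    by simp
  moreover have "real (card (N' - B)) = real (card N') - real (card B)"
    using \<open>finite N'\<close> by (simp add: B_def card_Diff_subset card_mono)
  ultimately have few: "(\<gamma> - 1) * real (card B) \<le> real (card (N' - B))"
    by (simp add: algebra_simps)
  have "(\<Sum>i\<in>N'. dist_set xa yc i W) \<le> (\<alpha> * \<gamma> + 1) / (\<gamma> - 1) * (\<Sum>i\<in>N'. dist_ac xa yc i c)"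
  proof (rule sum_le_if_exceptions_routed)
    show "dist_set xa yc i W \<le> \<alpha> * dist_ac xa yc i c" if "i \<in> N' - B" for i
      using that by (simp add: B_def not_less)
    show "dist_set xa yc i W \<le> dist_ac xa yc i c + dist_ac xa yc j c + dist_set xa yc j W" for i j
      using dist_set_triangle[OF \<open>finite W\<close> \<open>W \<noteq> {}\<close>] .
  qed (use \<open>finite N'\<close> \<open>\<gamma> > 1\<close> \<open>\<alpha> \<ge> 1\<close> few dist_ac_nonneg in \<open>auto simp: B_def\<close>)
  with violated show False by linarith
qed

lemma transferable_core_mono:
  assumes "transferable_core \<gamma> \<beta> N C xa yc k W" "\<beta> \<le> \<beta>'"
  shows "transferable_core \<gamma> \<beta>' N C xa yc k W"
proof -
  have "\<beta> * (\<Sum>i\<in>N'. dist_ac xa yc i c) \<le> \<beta>' * (\<Sum>i\<in>N'. dist_ac xa yc i c)" for N' c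
    using assms(2) by (intro mult_right_mono sum_nonneg dist_ac_nonneg)
  then show ?thesis
    using assms(1) unfolding transferable_core_def by (meson order_le_less_trans)
qed

theorem theorem3:
  fixes N :: "'i set" and C :: "'c set" and xa :: "'i \<Rightarrow> 'a::metric_space" and yc :: "'c \<Rightarrow> 'a"
    and k :: nat and W :: "'c set" and \<alpha> :: real
  assumes "finite N" and "k \<ge> 1" and "\<alpha> \<ge> 1"
    and "is_outcome C k W" and "W \<noteq> {}"
    and "proportionally_fair \<alpha> N C xa yc k W"
  shows "\<forall>\<gamma>::real. \<gamma> > 1 \<longrightarrow> transferable_core \<gamma> (\<gamma> * (\<alpha> + 1) / (\<gamma> - 1)) N C xa yc k W"
proof (intro allI impI)
  fix \<gamma> :: real
  assume "\<gamma> > 1"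
  then have "(\<alpha> * \<gamma> + 1) / (\<gamma> - 1) \<le> \<gamma> * (\<alpha> + 1) / (\<gamma> - 1)"
    by (intro divide_right_mono) (auto simp: algebra_simps)
  with \<open>\<gamma> > 1\<close> assms show "transferable_core \<gamma> (\<gamma> * (\<alpha> + 1) / (\<gamma> - 1)) N C xa yc k W"
    by (blast intro: transferable_core_mono proportionally_fair_imp_transferable_core)
qed

end
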